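(* For a greedy reading policy, with $R_{\mathbf G}(n)$ the number of records read from $\mathbf R$ among the first $n$, $$\frac{R_{\mathbf G}(n)-n/2}{\sqrt n}\xrightarrow{d}\mathrm N(0,\sigma_{R_{\mathbf G}}^2)\quad(n\to\infty),\qquad \sigma_{R_{\mathbf G}}^2:=\frac{\sigma_{\mathbf R}^2+\sigma_{\mathbf S}^2}{8\mu^2}.$$
   Context: Let $(r_i)_{i\ge1}$, $(s_i)_{i\ge1}$ be probability vectors on the positive integers with $\mu:=\sum_i r_is_i>0$. Let $\{L_{\mathbf R}(n)\}_{n\ge1}$, $\{L_{\mathbf S}(n)\}_{n\ge1}$ be independent i.i.d. sequences with $\Pr(L_{\mathbf R}(1)=i)=r_i$, $\Pr(L_{\mathbf S}(1)=i)=s_i$. Put $X_{\mathbf R}(n)=s_{L_{\mathbf R}(n)}$, $X_{\mathbf S}(n)=r_{L_{\mathbf S}(n)}$ (common mean $\mu$, variances $\sigma_{\mathbf R}^2,\sigma_{\mathbf S}^2$; standing assumption $\sigma_{\mathbf R}+\sigma_{\mathbf S}>0$), and $\Gamma_{\mathbf R}[m]=\sum_{j=1}^mX_{\mathbf R}(j)$, $\Gamma_{\mathbf S}[m]=\sum_{j=1}^mX_{\mathbf S}(j)$. A reading policy is a $\{0,1\}$-valued process $C(n)$ ($C(n)=1$ iff the $n$-th record is read from $\mathbf R$), $R(n)=\sum_{j\le n}C(j)$, $S(n)=n-R(n)$, with $C(n)$ being $\mathcal F_{n-1}$-measurable where $\mathcal F_n=\mathcal F_0\vee\sigma(L_{\mathbf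 R}(1),\dots,L_{\mathbf R}(R(n));L_{\mathbf S}(1),\dots,L_{\mathbf S}(S(n)))$ and $\mathcal F_0$ (randomization) is independent of the labels. A greedy policy satisfies, for $n\ge1$, $C(n+1)=1$ if $\Gamma_{\mathbf S}[S(n)]>\Gamma_{\mathbf R}[R(n)]$ and $C(n+1)=0$ if $\Gamma_{\mathbf S}[S(n)]<\Gamma_{\mathbf R}[R(n)]$ (ties arbitrary); the subscript $\mathbf G$ refers to it. *)

theory Defs
  imports "HOL-Probability.Probability"
begin

definition Rcount :: "(nat \<Rightarrow> 'a \<Rightarrow> bool) \<Rightarrow> nat \<Rightarrow> 'a \<Rightarrow> nat" where
  "Rcount C n w = card {j \<in> {1..n}. C j w}"

definition Scount :: "(nat \<Rightarrow> 'a \<Rightarrow> bool) \<Rightarrow> nat \<Rightarrow> 'a \<Rightarrow> nat" where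
  "Scount C n w = n - Rcount C n w"

definition GammaR :: "(nat \<Rightarrow> real) \<Rightarrow> (nat \<Rightarrow> 'a \<Rightarrow> nat) \<Rightarrow> nat \<Rightarrow> 'a \<Rightarrow> real" where
  "GammaR s LR m w = (\<Sum>j=1..m. s (LR j w))"

definition GammaS :: "(nat \<Rightarrow> real) \<Rightarrow> (nat \<Rightarrow> 'a \<Rightarrow> nat) \<Rightarrow> nat \<Rightarrow> 'a \<Rightarrow> real" where
  "GammaS r LS m w = (\<Sum>j=1..m. r (LS j w))"

text \<open>The filtration F_n = F_0 \<or> sigma(L_R(1..R(n)), L_S(1..S(n))), where F_0 = sigma(U) for the
  randomization variable U taking values in the measurable space N.  The label prefixes read so far are
  encoded as sequences padded by 0 beyond the observed index (together with R(n)).\<close>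
definition obs :: "('a \<Rightarrow> 'b) \<Rightarrow> (nat \<Rightarrow> 'a \<Rightarrow> nat) \<Rightarrow> (nat \<Rightarrow> 'a \<Rightarrow> nat)
    \<Rightarrow> (nat \<Rightarrow> 'a \<Rightarrow> bool) \<Rightarrow> nat \<Rightarrow> 'a \<Rightarrow> 'b \<times> nat \<times> (nat \<Rightarrow> nat) \<times> (nat \<Rightarrow> nat)" where
  "obs U LR LS C n w =
     (U w, Rcount C n w,
      (\<lambda>k. if 1 \<le> k \<and> k \<le> Rcount C n w then LR k w else 0),
      (\<lambda>k. if 1 \<le> k \<and> k \<le> Scount C n w then LS k w else 0))"

definition filt :: "'a measure \<Rightarrow> 'b measure \<Rightarrow> ('a \<Rightarrow> 'b) \<Rightarrow> (nat \<Rightarrow> 'a \<Rightarrow> nat) \<Rightarrow> (nat \<Rightarrow> 'a \<Rightarrow> nat)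
    \<Rightarrow> (nat \<Rightarrow> 'a \<Rightarrow> bool) \<Rightarrow> nat \<Rightarrow> 'a measure" where
  "filt M N U LR LS C n =
     vimage_algebra (space M) (obs U LR LS C n)
       (N \<Otimes>\<^sub>M count_space UNIV \<Otimes>\<^sub>M
        (\<Pi>\<^sub>M k\<in>UNIV. count_space UNIV) \<Otimes>\<^sub>M (\<Pi>\<^sub>M k\<in>UNIV. count_space UNIV))"

end

theory Submission
  imports Defs "HOL-Real_Asymp.Real_Asymp"
begin

text \<open>
  The greedy rule only ever extends the smaller partial sum, so each sum with its last record
  removed stays below the other: \<open>\<Gamma>\<^sub>S[S(n) - 1] \<le> \<Gamma>\<^sub>R[R(n)]\<close> and
  \<open>\<Gamma>\<^sub>R[R(n) - 1] \<le> \<Gamma>\<^sub>S[S(n)]\<close>. Hence, for \<open>k < n\<close>, the event \<open>R(n) \<le> k\<close> lies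
  between \<open>\<Gamma>\<^sub>S[n - 1 - k] < \<Gamma>\<^sub>R[k]\<close> and \<open>\<Gamma>\<^sub>S[n - 1 - k] \<le> \<Gamma>\<^sub>R[k]\<close>, pathwise
  and whatever the tie-breaking.

  Take \<open>k = \<lfloor>n/2 + x\<surd>n\<rfloor>\<close>, \<open>m = n - 1 - k\<close> and \<open>p = min k m\<close>. Pairing the first \<open>p\<close>
  labels of both sources gives \<open>\<Gamma>\<^sub>R[k] - \<Gamma>\<^sub>S[m] = \<mu>(k - m) - \<Sum>\<^bsub>i<p\<^esub> Y\<^sub>i + T\<close>, where
  \<open>Y\<^sub>i = r(L\<^sub>S(i+1)) - s(L\<^sub>R(i+1))\<close> are i.i.d. with mean 0 and variance
  \<open>\<sigma>\<^sub>R\<^sup>2 + \<sigma>\<^sub>S\<^sup>2\<close>, and \<open>T\<close> is a sum of \<open>|k - m| = O(\<surd>n)\<close> orthogonal centred terms, hence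
  \<open>o(\<surd>n)\<close> in probability by Chebyshev. Since \<open>(k - m)/\<surd>p \<longrightarrow> 2\<surd>2 x\<close>, the central
  limit theorem and a Slutsky argument send both probabilities to
  \<open>\<Phi>(2\<surd>2 \<mu> x / \<surd>(\<sigma>\<^sub>R\<^sup>2 + \<sigma>\<^sub>S\<^sup>2)) = \<Phi>(x / \<sigma>\<^sub>R\<^sub>G)\<close>.
\<close>

lemma nonneg_sums_one_le_one:
  fixes f :: "nat \<Rightarrow> real"
  assumes "\<And>i. 0 \<le> f i" and "f sums 1"
  shows "f i \<le> 1"
proof -
  have "sum f {i} \<le> suminf f"
    using assms by (intro sum_le_suminf) (auto simp: sums_iff)
  then show ?thesis
    using assms(2) by (simp add: sums_iff)
qed

lemma (in prob_space) expectation_comp_nat_valued: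
  fixes X :: "'a \<Rightarrow> nat" and q h :: "nat \<Rightarrow> real"
  assumes X: "X \<in> measurable M (count_space UNIV)"
    and q: "\<And>i. prob {w\<in>space M. X w = i} = q i"
    and h: "\<And>i. 0 \<le> h i"
    and summable: "summable (\<lambda>i. h i * q i)"
  shows "expectation (\<lambda>w. h (X w)) = (\<Sum>i. h i * q i)"
proof -
  have q_nonneg: "0 \<le> q i" for i
    using q[of i] by (metis measure_nonneg)
  have "distr M (count_space UNIV) X = density (count_space UNIV) (\<lambda>i. ennreal (q i))"
  proof (rule measure_eqI_countable[where A=UNIV])
    fix i :: nat
    have "X -` {i} \<inter> space M = {w\<in>space M. X w = i}"
      by auto
    then show "emeasure (distr M (count_space UNIV) X) {i}
        = emeasure (density (count_space UNIV) (\<lambda>i. ennreal (q i))) {i}"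
      using X q[of i] by (simp add: emeasure_distr emeasure_eq_measure emeasure_density)
  qed auto
  then have "(\<integral>\<^sup>+ i. ennreal (h i) \<partial>distr M (count_space UNIV) X)
      = (\<integral>\<^sup>+ i. ennreal (q i) * ennreal (h i) \<partial>count_space UNIV)"
    by (simp add: nn_integral_density)
  then have "(\<integral>\<^sup>+ w. ennreal (h (X w)) \<partial>M) = (\<integral>\<^sup>+ i. ennreal (q i) * ennreal (h i) \<partial>count_space UNIV)"
    using X by (simp add: nn_integral_distr)
  also have "\<dots> = ennreal (\<Sum>i. h i * q i)"
    using summable h q_nonneg
    by (simp add: nn_integral_count_space_nat ennreal_mult'[symmetric] mult.commute suminf_ennreal2)
  finally show ?thesis
    using X h q_nonneg summable by (simp add: integral_eq_nn_integral suminf_nonneg)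
qed

lemma (in prob_space) expectation_sum_square_le_card:
  fixes X :: "'i \<Rightarrow> 'a \<Rightarrow> real"
  assumes J: "finite J"
    and meas: "\<And>a. a \<in> J \<Longrightarrow> X a \<in> borel_measurable M"
    and bound: "\<And>a w. a \<in> J \<Longrightarrow> \<bar>X a w\<bar> \<le> 1"
    and orth: "\<And>a b. a \<in> J \<Longrightarrow> b \<in> J \<Longrightarrow> a \<noteq> b \<Longrightarrow> expectation (\<lambda>w. X a w * X b w) = 0"
  shows "integrable M (\<lambda>w. (\<Sum>a\<in>J. X a w)\<^sup>2)"
    and "expectation (\<lambda>w. (\<Sum>a\<in>J. X a w)\<^sup>2) \<le> card J"
proof -
  have int: "integrable M (\<lambda>w. X a w * X b w)" if "a \<in> J" "b \<in> J" for a b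
  proof (rule integrable_const_bound[where B=1])
    show "AE w in M. norm (X a w * X b w) \<le> 1"
      using bound that by (auto simp: abs_mult intro!: mult_le_one)
  qed (use meas that in auto)
  then show "integrable M (\<lambda>w. (\<Sum>a\<in>J. X a w)\<^sup>2)"
    by (simp add: power2_eq_square sum_product)
  have diag: "(\<Sum>b\<in>J. expectation (\<lambda>w. X a w * X b w)) = expectation (\<lambda>w. X a w * X a w)"
    if a: "a \<in> J" for a
    using orth[OF a] by (subst sum.remove[OF J a]) (auto intro!: sum.neutral)
  have "expectation (\<lambda>w. (\<Sum>a\<in>J. X a w)\<^sup>2) = (\<Sum>a\<in>J. \<Sum>b\<in>J. expectation (\<lambda>w. X a w * X b w))"
    using int by (simp add: power2_eq_square sum_product Bochner_Integration.integral_sum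
        Bochner_Integration.integrable_sum)
  also have "\<dots> = (\<Sum>a\<in>J. expectation (\<lambda>w. X a w * X a w))"
    using diag by simp
  also have "\<dots> \<le> (\<Sum>a\<in>J. 1)"
  proof (rule sum_mono)
    fix a
    assume a: "a \<in> J"
    have "expectation (\<lambda>w. X a w * X a w) \<le> expectation (\<lambda>w. 1)"
      using bound[OF a] int[OF a a]
      by (intro integral_mono) (auto simp: abs_square_le_1 simp flip: power2_eq_square)
    then show "expectation (\<lambda>w. X a w * X a w) \<le> 1"
      by (simp add: prob_space)
  qed
  finally show "expectation (\<lambda>w. (\<Sum>a\<in>J. X a w)\<^sup>2) \<le> card J"
    by simp
qed

lemma (in prob_space) prob_abs_sum_ge_le_card:
  fixes X :: "'i \<Rightarrow> 'a \<Rightarrow> real"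
  assumes "finite J"
    and "\<And>a. a \<in> J \<Longrightarrow> X a \<in> borel_measurable M"
    and "\<And>a w. a \<in> J \<Longrightarrow> \<bar>X a w\<bar> \<le> 1"
    and "\<And>a b. a \<in> J \<Longrightarrow> b \<in> J \<Longrightarrow> a \<noteq> b \<Longrightarrow> expectation (\<lambda>w. X a w * X b w) = 0"
    and c: "c > 0"
  shows "prob {w\<in>space M. c \<le> \<bar>\<Sum>a\<in>J. X a w\<bar>} \<le> card J / c\<^sup>2"
proof -
  note second_moment = expectation_sum_square_le_card[OF assms(1-4)]
  have "prob {w\<in>space M. c \<le> \<bar>\<Sum>a\<in>J. X a w\<bar>} = prob {w\<in>space M. c\<^sup>2 \<le> (\<Sum>a\<in>J. X a w)\<^sup>2}"
    using c by (intro arg_cong[where f=prob]) (auto simp: abs_le_square_iff[symmetric] abs_of_pos)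
  also have "\<dots> \<le> expectation (\<lambda>w. (\<Sum>a\<in>J. X a w)\<^sup>2) / c\<^sup>2"
    using c second_moment(1) by (intro integral_Markov_inequality_measure[where A="space M"]) auto
  also have "\<dots> \<le> card J / c\<^sup>2"
    using second_moment(2) c by (simp add: divide_right_mono)
  finally show ?thesis .
qed

lemma (in prob_space) slutsky_sandwich:
  fixes Z W :: "nat \<Rightarrow> 'a \<Rightarrow> real" and F :: "real \<Rightarrow> real" and a :: "nat \<Rightarrow> real"
  assumes Z_meas: "\<And>n. Z n \<in> borel_measurable M" and W_meas: "\<And>n. W n \<in> borel_measurable M"
    and Z_conv: "\<And>t. (\<lambda>n. prob {x\<in>space M. Z n x \<le> t}) \<longlonglongrightarrow> F t"
    and F_cont: "isCont F w"
    and W_conv: "\<And>e. e > 0 \<Longrightarrow> (\<lambda>n. prob {x\<in>space M. e \<le> \<bar>W n x - w\<bar>}) \<longlonglongrightarrow> 0"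
    and between: "eventually (\<lambda>n. prob {x\<in>space M. Z n x < W n x} \<le> a n
                                 \<and> a n \<le> prob {x\<in>space M. Z n x \<le> W n x}) sequentially"
  shows "a \<longlonglongrightarrow> F w"
proof (rule tendstoI)
  fix d :: real
  assume d: "d > 0"
  obtain e where e: "e > 0" and F_near: "F (w + e) < F w + d / 3" "F w - d / 3 < F (w - e)"
  proof -
    obtain s where s: "s > 0" and "\<And>y. y \<noteq> w \<Longrightarrow> \<bar>y - w\<bar> < s \<Longrightarrow> \<bar>F y - F w\<bar> < d / 3"
      using LIM_D[OF F_cont[unfolded isCont_def], of "d / 3"] d by auto
    then have "\<bar>F (w + s / 2) - F w\<bar> < d / 3" "\<bar>F (w - s / 2) - F w\<bar> < d / 3"
      by auto
    with s show ?thesis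
      by (intro that[of "s / 2"]) (simp_all only: abs_less_iff, linarith+)
  qed
  have "eventually (\<lambda>n. prob {x\<in>space M. Z n x \<le> w + e} < F (w + e) + d / 3) sequentially"
    "eventually (\<lambda>n. F (w - e) - d / 3 < prob {x\<in>space M. Z n x \<le> w - e}) sequentially"
    "eventually (\<lambda>n. prob {x\<in>space M. e \<le> \<bar>W n x - w\<bar>} < d / 3) sequentially"
    using order_tendstoD(2)[OF Z_conv[of "w + e"]] order_tendstoD(1)[OF Z_conv[of "w - e"]]
      order_tendstoD(2)[OF W_conv[OF e], of "d / 3"] d by auto
  then show "eventually (\<lambda>n. dist (a n) (F w) < d) sequentially"
    using between
  proof eventually_elim
    case (elim n)
    let ?B = "{x\<in>space M. e \<le> \<bar>W n x - w\<bar>}"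
    note [measurable] = Z_meas[of n] W_meas[of n]
    have upper: "prob {x\<in>space M. Z n x \<le> W n x} \<le> prob {x\<in>space M. Z n x \<le> w + e} + prob ?B"
      by (rule order_trans[OF finite_measure_mono measure_Un_le]) auto
    have lower: "prob {x\<in>space M. Z n x \<le> w - e} \<le> prob {x\<in>space M. Z n x < W n x} + prob ?B"
      by (rule order_trans[OF finite_measure_mono measure_Un_le]) auto
    show ?case
      using elim upper lower F_near by (auto simp: dist_real_def abs_less_iff)
  qed
qed

lemma normal_cdf_scale:
  assumes \<sigma>: "\<sigma> > 0"
  shows "cdf (density lborel (normal_density 0 \<sigma>)) x = cdf std_normal_distribution (x / \<sigma>)"
proof -
  interpret std: prob_space std_normal_distribution
    using real_dist_normal_dist by (simp add: real_distribution_def)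
  have "distributed std_normal_distribution lborel (\<lambda>t. t) std_normal_density"
    by (simp add: distributed_def distr_id2)
  then have "distributed std_normal_distribution lborel (\<lambda>t. 0 + \<sigma> * t) (normal_density (0 + \<sigma> * 0) (\<bar>\<sigma>\<bar> * 1))"
    by (rule std.normal_density_affine) (use \<sigma> in auto)
  then have scaled: "density lborel (normal_density 0 \<sigma>) = distr std_normal_distribution lborel (\<lambda>t. \<sigma> * t)"
    using \<sigma> by (simp add: distributed_def)
  have "(\<lambda>t. \<sigma> * t) -` {..x} \<inter> space std_normal_distribution = {..x / \<sigma>}"
    using \<sigma> by (auto simp: pos_le_divide_eq mult.commute)
  then show ?thesis
    by (simp add: scaled cdf_def2 measure_distr)
qed

lemma std_normal_isCont_cdf: "isCont (cdf std_normal_distribution) t"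
proof -
  interpret std: real_distribution std_normal_distribution
    by (rule real_dist_normal_dist)
  have "emeasure std_normal_distribution {t} = 0"
    by (simp add: emeasure_density nn_integral_indicator_singleton)
  then show ?thesis
    by (simp add: std.isCont_cdf measure_def)
qed

lemma (in prob_space) cdf_distr:
  "g \<in> borel_measurable M \<Longrightarrow> cdf (distr M borel g) t = prob {w\<in>space M. g w \<le> t}"
  unfolding cdf_def2 by (subst measure_distr) (auto intro!: arg_cong[where f=prob])

lemma sqrt_eight_scaling:
  fixes mu v x :: real
  assumes "0 < mu" and "0 < v"
  shows "mu * (2 * sqrt 2 * x) / sqrt v = x / sqrt (v / (8 * mu\<^sup>2))"
proof -
  have "sqrt (8 * mu\<^sup>2) = sqrt ((2 * sqrt 2 * mu)\<^sup>2)"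
    by (simp add: power_mult_distrib)
  also have "\<dots> = 2 * sqrt 2 * mu"
    using assms(1) by (simp only: real_sqrt_abs) simp
  finally have "sqrt (8 * mu\<^sup>2) = 2 * sqrt 2 * mu" .
  then show ?thesis
    using assms by (simp add: real_sqrt_divide field_simps)
qed

lemma Rcount_0 [simp]: "Rcount C 0 w = 0"
  by (simp add: Rcount_def)

lemma Rcount_Suc: "Rcount C (Suc n) w = Rcount C n w + (if C (Suc n) w then 1 else 0)"
proof -
  have "{j \<in> {1..Suc n}. C j w}
      = (if C (Suc n) w then insert (Suc n) {j \<in> {1..n}. C j w} else {j \<in> {1..n}. C j w})"
    by (auto simp: le_Suc_eq)
  then show ?thesis
    by (simp add: Rcount_def)
qed

lemma Rcount_le: "Rcount C n w \<le> n"
proof -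
  have "card {j \<in> {1..n}. C j w} \<le> card {1..n}"
    by (intro card_mono) auto
  then show ?thesis
    by (simp add: Rcount_def)
qed

lemma measurable_padded_prefix:
  fixes g :: "'a \<Rightarrow> nat" and L :: "nat \<Rightarrow> 'a \<Rightarrow> nat"
  assumes g: "g \<in> measurable M (count_space UNIV)"
    and L: "\<And>k. k \<ge> 1 \<Longrightarrow> L k \<in> measurable M (count_space UNIV)"
  shows "(\<lambda>w k. if 1 \<le> k \<and> k \<le> g w then L k w else 0) \<in> measurable M (\<Pi>\<^sub>M k\<in>UNIV. count_space UNIV)"
proof (rule measurable_PiM_single')
  fix k :: nat
  show "(\<lambda>w. if 1 \<le> k \<and> k \<le> g w then L k w else 0) \<in> measurable M (count_space UNIV)"
  proof (cases "k \<ge> 1")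
    case True
    have "(\<lambda>w. (\<lambda>i w. if 1 \<le> k \<and> k \<le> i then L k w else 0) (g w) w) \<in> measurable M (count_space UNIV)"
      by (rule measurable_compose_countable[OF _ g]) (use L[OF True] in auto)
    then show ?thesis
      by simp
  qed simp
qed auto

lemma measurable_Rcount_policy:
  assumes U: "U \<in> measurable M N"
    and LR: "\<And>n. n \<ge> 1 \<Longrightarrow> LR n \<in> measurable M (count_space UNIV)"
    and LS: "\<And>n. n \<ge> 1 \<Longrightarrow> LS n \<in> measurable M (count_space UNIV)"
    and policy: "\<And>n. C (Suc n) \<in> measurable (filt M N U LR LS C n) (count_space UNIV)"
  shows "Rcount C n \<in> measurable M (count_space UNIV)"
proof (induction n)
  case 0
  then show ?case
    by simp
next
  case (Suc n)
  have "Scount C n \<in> measurable M (count_space UNIV)"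
    unfolding Scount_def[abs_def] by (rule measurable_compose[OF Suc.IH]) auto
  then have "obs U LR LS C n \<in> measurable M (N \<Otimes>\<^sub>M count_space UNIV \<Otimes>\<^sub>M
        (\<Pi>\<^sub>M k\<in>UNIV. count_space UNIV) \<Otimes>\<^sub>M (\<Pi>\<^sub>M k\<in>UNIV. count_space UNIV))"
    unfolding obs_def[abs_def]
    by (intro measurable_Pair U Suc.IH measurable_padded_prefix LR LS)
  then have "id \<in> measurable M (filt M N U LR LS C n)"
    unfolding filt_def by (intro measurable_vimage_algebra2) auto
  from measurable_comp[OF this policy[of n]]
  have C_meas: "C (Suc n) \<in> measurable M (count_space UNIV)"
    by simp
  have "(\<lambda>w. (\<lambda>i w. i + (if C (Suc n) w then 1 else 0)) (Rcount C n w) w) \<in> measurable M (count_space UNIV)"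
    by (rule measurable_compose_countable[OF _ Suc.IH]) (use C_meas in measurable)
  then show ?case
    by (simp add: Rcount_Suc[abs_def])
qed

lemma GammaR_mono: "(\<And>i. 0 \<le> s i) \<Longrightarrow> a \<le> b \<Longrightarrow> GammaR s LR a w \<le> GammaR s LR b w"
  unfolding GammaR_def by (intro sum_mono2) auto

lemma GammaS_mono: "(\<And>i. 0 \<le> r i) \<Longrightarrow> a \<le> b \<Longrightarrow> GammaS r LS a w \<le> GammaS r LS b w"
  unfolding GammaS_def by (intro sum_mono2) auto

lemma greedy_invariant:
  assumes r: "\<And>i. 0 \<le> r i" and s: "\<And>i. 0 \<le> s i"
    and greedy_R: "\<And>n. n \<ge> 1 \<Longrightarrow> GammaS r LS (Scount C n w) w > GammaR s LR (Rcount C n w) w \<Longrightarrow> C (Suc n) w"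
    and greedy_S: "\<And>n. n \<ge> 1 \<Longrightarrow> GammaS r LS (Scount C n w) w < GammaR s LR (Rcount C n w) w \<Longrightarrow> \<not> C (Suc n) w"
  shows "(1 \<le> Scount C n w \<longrightarrow> GammaS r LS (Scount C n w - 1) w \<le> GammaR s LR (Rcount C n w) w) \<and>
         (1 \<le> Rcount C n w \<longrightarrow> GammaR s LR (Rcount C n w - 1) w \<le> GammaS r LS (Scount C n w) w)"
proof (induction n)
  case 0
  then show ?case
    by (simp add: Scount_def)
next
  case (Suc n)
  have "Rcount C n w \<le> n"
    by (rule Rcount_le)
  consider "n = 0" | "n \<ge> 1" "C (Suc n) w" | "n \<ge> 1" "\<not> C (Suc n) w"
    by linarith
  then show ?case
  proof cases
    case 1
    then show ?thesis
      using r s by (auto simp: Rcount_Suc Scount_def GammaR_def GammaS_def sum_nonneg)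
  next
    case 2
    then have "\<not> GammaS r LS (Scount C n w) w < GammaR s LR (Rcount C n w) w"
      using greedy_S by blast
    then show ?thesis
      using 2 Suc.IH \<open>Rcount C n w \<le> n\<close>
        GammaR_mono[where s=s and LR=LR and w=w and a="Rcount C n w" and b="Rcount C n w + 1", OF s]
      by (auto simp: Rcount_Suc Scount_def)
  next
    case 3
    then have "\<not> GammaR s LR (Rcount C n w) w < GammaS r LS (Scount C n w) w"
      using greedy_R by blast
    then show ?thesis
      using 3 Suc.IH \<open>Rcount C n w \<le> n\<close>
        GammaS_mono[where r=r and LS=LS and w=w and a="Scount C n w" and b="Scount C n w + 1", OF r]
      by (auto simp: Rcount_Suc Scount_def Suc_diff_le)
  qed
qed

lemma greedy_Rcount_le:
  assumes r: "\<And>i. 0 \<le> r i" and s: "\<And>i. 0 \<le> s i"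
    and greedy_R: "\<And>n. n \<ge> 1 \<Longrightarrow> GammaS r LS (Scount C n w) w > GammaR s LR (Rcount C n w) w \<Longrightarrow> C (Suc n) w"
    and greedy_S: "\<And>n. n \<ge> 1 \<Longrightarrow> GammaS r LS (Scount C n w) w < GammaR s LR (Rcount C n w) w \<Longrightarrow> \<not> C (Suc n) w"
    and k: "k < n"
  shows "GammaS r LS (n - 1 - k) w < GammaR s LR k w \<Longrightarrow> Rcount C n w \<le> k"
    and "Rcount C n w \<le> k \<Longrightarrow> GammaS r LS (n - 1 - k) w \<le> GammaR s LR k w"
proof -
  note invariant = greedy_invariant[where r=r and s=s and LR=LR and LS=LS and C=C and w=w and n=n,
      OF r s greedy_R greedy_S]
  have "Rcount C n w \<le> n"
    by (rule Rcount_le)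
  show "Rcount C n w \<le> k" if less: "GammaS r LS (n - 1 - k) w < GammaR s LR k w"
  proof (rule ccontr)
    assume "\<not> Rcount C n w \<le> k"
    then have "GammaR s LR k w \<le> GammaR s LR (Rcount C n w - 1) w"
      by (intro GammaR_mono[OF s]) simp
    also have "\<dots> \<le> GammaS r LS (Scount C n w) w"
      using invariant \<open>\<not> Rcount C n w \<le> k\<close> by simp
    also have "\<dots> \<le> GammaS r LS (n - 1 - k) w"
      using \<open>\<not> Rcount C n w \<le> k\<close> \<open>Rcount C n w \<le> n\<close>
      by (intro GammaS_mono[OF r]) (simp add: Scount_def)
    finally show False
      using less by simp
  qed
  show "GammaS r LS (n - 1 - k) w \<le> GammaR s LR k w" if le: "Rcount C n w \<le> k"
  proof -
    have "GammaS r LS (n - 1 - k) w \<le> GammaS r LS (Scount C n w - 1) w"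
      using le k by (intro GammaS_mono[OF r]) (simp add: Scount_def)
    also have "\<dots> \<le> GammaR s LR (Rcount C n w) w"
      using invariant le k by (simp add: Scount_def)
    also have "\<dots> \<le> GammaR s LR k w"
      using le by (intro GammaR_mono[OF s])
    finally show ?thesis .
  qed
qed

definition threshold :: "real \<Rightarrow> nat \<Rightarrow> nat" where
  "threshold x n = nat \<lfloor>real n / 2 + x * sqrt (real n)\<rfloor>"

lemma eventually_threshold_range:
  "eventually (\<lambda>n. 0 \<le> real n / 2 + x * sqrt (real n) \<and> real n / 2 + x * sqrt (real n) < real n) sequentially"
proof -
  have "eventually (\<lambda>n. 0 \<le> real n / 2 + x * sqrt (real n)) sequentially"
    "eventually (\<lambda>n. real n / 2 + x * sqrt (real n) < real n) sequentially"
    by real_asymp+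
  then show ?thesis
    by eventually_elim simp
qed

lemma le_threshold_iff:
  assumes "0 < n" and "0 \<le> real n / 2 + x * sqrt (real n)"
  shows "(real R - real n / 2) / sqrt (real n) \<le> x \<longleftrightarrow> R \<le> threshold x n"
proof -
  have "(real R - real n / 2) / sqrt (real n) \<le> x \<longleftrightarrow> real R \<le> real n / 2 + x * sqrt (real n)"
    using assms(1) by (simp add: pos_divide_le_eq algebra_simps)
  also have "\<dots> \<longleftrightarrow> R \<le> threshold x n"
    using assms(2) unfolding threshold_def by (simp add: le_nat_iff le_floor_iff)
  finally show ?thesis .
qed

lemma threshold_bounds:
  fixes x :: real and n :: nat
  defines "k \<equiv> threshold x n"
  assumes "0 \<le> real n / 2 + x * sqrt (real n)" and "real n / 2 + x * sqrt (real n) < real n"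
  shows "k < n"
    and "\<bar>(real k - real (n - 1 - k)) - 2 * x * sqrt (real n)\<bar> \<le> 1"
    and "real n / 2 - \<bar>x\<bar> * sqrt (real n) - 1 \<le> real (min k (n - 1 - k))"
    and "real (min k (n - 1 - k)) \<le> (real n - 1) / 2"
proof -
  have k: "real n / 2 + x * sqrt (real n) - 1 < real k" "real k \<le> real n / 2 + x * sqrt (real n)"
    using assms(2) unfolding k_def threshold_def by linarith+
  then show "k < n"
    using assms(3) by linarith
  then have m: "real (n - 1 - k) = real n - 1 - real k"
    by (simp add: of_nat_diff)
  show "\<bar>(real k - real (n - 1 - k)) - 2 * x * sqrt (real n)\<bar> \<le> 1"
    using k m by (simp add: abs_le_iff)
  have "\<bar>x * sqrt (real n)\<bar> \<le> \<bar>x\<bar> * sqrt (real n)"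
    by (simp add: abs_mult)
  then show "real n / 2 - \<bar>x\<bar> * sqrt (real n) - 1 \<le> real (min k (n - 1 - k))"
    using k m unfolding of_nat_min abs_le_iff by linarith
  have "2 * min k (n - 1 - k) \<le> n - 1"
    by (simp add: min_def, arith)
  then have "real (2 * min k (n - 1 - k)) \<le> real (n - 1)"
    by (simp only: of_nat_le_iff)
  with \<open>k < n\<close> show "real (min k (n - 1 - k)) \<le> (real n - 1) / 2"
    by (simp add: of_nat_diff)
qed

lemma eventually_threshold_bounds:
  fixes x :: real
  defines "k \<equiv> threshold x" and "m \<equiv> \<lambda>n. n - 1 - threshold x n"
  defines "p \<equiv> \<lambda>n. min (k n) (m n)"
  shows "eventually (\<lambda>n. 0 < n \<and>
      \<bar>(real (k n) - real (m n)) - 2 * x * sqrt (real n)\<bar> \<le> 1 \<and>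
      real n / 2 - \<bar>x\<bar> * sqrt (real n) - 1 \<le> real (p n) \<and> real (p n) \<le> (real n - 1) / 2) sequentially"
  using eventually_threshold_range[of x] eventually_gt_at_top[of 0]
  by eventually_elim (use threshold_bounds in \<open>auto simp: k_def m_def p_def\<close>)

lemma threshold_gap_tendsto:
  fixes x :: real
  defines "k \<equiv> threshold x" and "m \<equiv> \<lambda>n. n - 1 - threshold x n"
  shows "(\<lambda>n. (real (k n) - real (m n)) / sqrt (real n)) \<longlonglongrightarrow> 2 * x"
proof (rule tendsto_sandwich)
  show "(\<lambda>n. (2 * x * sqrt (real n) - 1) / sqrt (real n)) \<longlonglongrightarrow> 2 * x"
    and "(\<lambda>n. (2 * x * sqrt (real n) + 1) / sqrt (real n)) \<longlonglongrightarrow> 2 * x"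
    by real_asymp+
  have bounds: "eventually (\<lambda>n. \<bar>(real (k n) - real (m n)) - 2 * x * sqrt (real n)\<bar> \<le> 1) sequentially"
    using eventually_threshold_bounds[of x] by eventually_elim (simp add: k_def m_def)
  show "eventually (\<lambda>n. (2 * x * sqrt (real n) - 1) / sqrt (real n)
      \<le> (real (k n) - real (m n)) / sqrt (real n)) sequentially"
    using bounds by eventually_elim (auto intro!: divide_right_mono simp: abs_le_iff)
  show "eventually (\<lambda>n. (real (k n) - real (m n)) / sqrt (real n)
      \<le> (2 * x * sqrt (real n) + 1) / sqrt (real n)) sequentially"
    using bounds by eventually_elim (auto intro!: divide_right_mono simp: abs_le_iff)
qed

lemma threshold_min_asymptotics:
  fixes x :: real
  defines "p \<equiv> \<lambda>n. min (threshold x n) (n - 1 - threshold x n)"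
  shows "filterlim p at_top sequentially"
    and "(\<lambda>n. real (p n) / real n) \<longlonglongrightarrow> 1 / 2"
proof -
  have bounds: "eventually (\<lambda>n. 0 < n \<and>
      real n / 2 - \<bar>x\<bar> * sqrt (real n) - 1 \<le> real (p n) \<and> real (p n) \<le> (real n - 1) / 2) sequentially"
    using eventually_threshold_bounds[of x] by eventually_elim (simp add: p_def)
  have "filterlim (\<lambda>n. real n / 2 - \<bar>x\<bar> * sqrt (real n) - 1) at_top sequentially"
    by real_asymp
  then show "filterlim p at_top sequentially"
    unfolding filterlim_sequentially_iff_filterlim_real
    by (rule filterlim_at_top_mono) (use bounds in \<open>eventually_elim, auto\<close>)
  show "(\<lambda>n. real (p n) / real n) \<longlonglongrightarrow> 1 / 2"
  proof (rule tendsto_sandwich)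
    show "(\<lambda>n. (real n / 2 - \<bar>x\<bar> * sqrt (real n) - 1) / real n) \<longlonglongrightarrow> 1 / 2"
      and "(\<lambda>n. (real n - 1) / 2 / real n) \<longlonglongrightarrow> 1 / 2"
      by real_asymp+
    show "eventually (\<lambda>n. (real n / 2 - \<bar>x\<bar> * sqrt (real n) - 1) / real n \<le> real (p n) / real n) sequentially"
      using bounds by eventually_elim (simp add: divide_right_mono)
    show "eventually (\<lambda>n. real (p n) / real n \<le> (real n - 1) / 2 / real n) sequentially"
      using bounds by eventually_elim (intro divide_right_mono, auto)
  qed
qed

lemma threshold_asymptotics:
  fixes x :: real
  defines "k \<equiv> threshold x" and "m \<equiv> \<lambda>n. n - 1 - threshold x n"
  defines "p \<equiv> \<lambda>n. min (k n) (m n)"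
  shows "filterlim p at_top sequentially"
    and "(\<lambda>n. (real (k n) - real (m n)) / sqrt (real (p n))) \<longlonglongrightarrow> 2 * sqrt 2 * x"
proof -
  show "filterlim p at_top sequentially"
    using threshold_min_asymptotics(1) by (simp add: p_def k_def m_def)
  have "(\<lambda>n. (real (k n) - real (m n)) / sqrt (real n) / sqrt (real (p n) / real n))
      \<longlonglongrightarrow> 2 * x / sqrt (1 / 2)"
    unfolding p_def k_def m_def by (intro tendsto_intros threshold_gap_tendsto threshold_min_asymptotics) simp
  moreover have "2 * x / sqrt (1 / 2) = 2 * sqrt 2 * x"
    by (simp add: real_sqrt_divide)
  moreover have "eventually (\<lambda>n. (real (k n) - real (m n)) / sqrt (real n) / sqrt (real (p n) / real n)
      = (real (k n) - real (m n)) / sqrt (real (p n))) sequentially"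
    using eventually_gt_at_top[of 0] by eventually_elim (simp add: real_sqrt_divide)
  ultimately show "(\<lambda>n. (real (k n) - real (m n)) / sqrt (real (p n))) \<longlonglongrightarrow> 2 * sqrt 2 * x"
    by (simp add: Lim_transform_eventually)
qed

lemma eventually_pos_of_filterlim_at_top:
  fixes p :: "nat \<Rightarrow> nat"
  assumes "filterlim p at_top F"
  shows "eventually (\<lambda>n. 0 < p n) F"
proof -
  have "eventually (\<lambda>n. 1 \<le> p n) F"
    using assms unfolding filterlim_at_top by blast
  then show ?thesis
    by eventually_elim simp
qed

lemma tendsto_abs_gap_div_min:
  fixes k m :: "nat \<Rightarrow> nat" and c :: real
  defines "p \<equiv> \<lambda>n. min (k n) (m n)"
  assumes p: "filterlim p at_top sequentially"
    and gap: "(\<lambda>n. (real (k n) - real (m n)) / sqrt (real (p n))) \<longlonglongrightarrow> c"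
  shows "(\<lambda>n. \<bar>real (k n) - real (m n)\<bar> / real (p n)) \<longlonglongrightarrow> 0"
proof -
  have "filterlim (\<lambda>n. sqrt (real (p n))) at_infinity sequentially"
    using p unfolding filterlim_sequentially_iff_filterlim_real
    by (intro filterlim_at_top_imp_at_infinity filterlim_compose[OF sqrt_at_top])
  then have "(\<lambda>n. 1 / sqrt (real (p n))) \<longlonglongrightarrow> 0"
    by (intro tendsto_divide_0[OF tendsto_const])
  then have "(\<lambda>n. \<bar>(real (k n) - real (m n)) / sqrt (real (p n))\<bar> * (1 / sqrt (real (p n)))) \<longlonglongrightarrow> \<bar>c\<bar> * 0"
    by (intro tendsto_intros gap)
  moreover have "eventually (\<lambda>n. \<bar>(real (k n) - real (m n)) / sqrt (real (p n))\<bar> * (1 / sqrt (real (p n)))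
      = \<bar>real (k n) - real (m n)\<bar> / real (p n)) sequentially"
    using eventually_pos_of_filterlim_at_top[OF p] by eventually_elim (simp add: abs_divide)
  ultimately show ?thesis
    by (simp add: Lim_transform_eventually)
qed

locale label_sequences = prob_space M for M :: "'a measure" +
  fixes r s :: "nat \<Rightarrow> real" and LR LS :: "nat \<Rightarrow> 'a \<Rightarrow> nat"
  assumes r_nonneg: "\<And>i. 0 \<le> r i" and r_sums: "r sums 1"
    and s_nonneg: "\<And>i. 0 \<le> s i" and s_sums: "s sums 1"
    and LR_dist: "\<And>n i. n \<ge> 1 \<Longrightarrow> prob {w \<in> space M. LR n w = i} = r i"
    and LS_dist: "\<And>n i. n \<ge> 1 \<Longrightarrow> prob {w \<in> space M. LS n w = i} = s i"
    and labels_indep: "indep_vars (\<lambda>_. count_space UNIV) (\<lambda>(b, n). if b then LR n else LS n) (UNIV \<times> {1..})"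
begin

definition label :: "bool \<times> nat \<Rightarrow> 'a \<Rightarrow> nat" where
  "label = (\<lambda>(b, n). if b then LR n else LS n)"

definition mu :: real where
  "mu = (\<Sum>i. r i * s i)"

definition centred :: "bool \<times> nat \<Rightarrow> 'a \<Rightarrow> real" where
  "centred a w = (if fst a then s (label a w) - mu else mu - r (label a w))"

text \<open>Indexed from 0, so that the partial sums \<open>\<Sum>i<q\<close> of the central limit theorem
  pair the labels \<open>1..q\<close> of both sources.\<close>
definition pair_diff :: "nat \<Rightarrow> 'a \<Rightarrow> real" where
  "pair_diff j w = r (LS (Suc j) w) - s (LR (Suc j) w)"

definition read_labels :: "nat \<Rightarrow> nat \<Rightarrow> (bool \<times> nat) set" where
  "read_labels k m = Pair True ` {1..k} \<union> Pair False ` {1..m}"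

lemma label_simps [simp]: "label (True, n) = LR n" "label (False, n) = LS n"
  by (simp_all add: label_def)

lemma indep_vars_label: "indep_vars (\<lambda>_. count_space UNIV) label (UNIV \<times> {1..})"
  using labels_indep unfolding label_def .

lemma measurable_label: "a \<in> UNIV \<times> {1..} \<Longrightarrow> label a \<in> measurable M (count_space UNIV)"
  using indep_vars_label unfolding indep_vars_def by auto

lemma borel_measurable_fun_label: "a \<in> UNIV \<times> {1..} \<Longrightarrow> (\<lambda>w. g (label a w) :: real) \<in> borel_measurable M"
  by (rule measurable_compose[OF measurable_label]) auto

lemma borel_measurable_fun_LR: "1 \<le> n \<Longrightarrow> (\<lambda>w. g (LR n w) :: real) \<in> borel_measurable M"
  using borel_measurable_fun_label[of "(True, n)"] by simp

lemma borel_measurable_fun_LS: "1 \<le> n \<Longrightarrow> (\<lambda>w. g (LS n w) :: real) \<in> borel_measurable M"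
  using borel_measurable_fun_label[of "(False, n)"] by simp

lemma integrable_fun_label:
  "a \<in> UNIV \<times> {1..} \<Longrightarrow> (\<And>i. \<bar>g i\<bar> \<le> B) \<Longrightarrow> integrable M (\<lambda>w. g (label a w) :: real)"
  by (rule integrable_const_bound[where B=B]) (auto intro: borel_measurable_fun_label)

lemma r_le_1: "r i \<le> 1"
  by (rule nonneg_sums_one_le_one[OF r_nonneg r_sums])

lemma s_le_1: "s i \<le> 1"
  by (rule nonneg_sums_one_le_one[OF s_nonneg s_sums])

lemma summable_rs: "summable (\<lambda>i. r i * s i)"
  by (rule summable_comparison_test[where g=r])
    (use r_sums r_nonneg s_nonneg s_le_1 in \<open>auto simp: sums_iff intro!: exI[of _ 0] mult_left_le\<close>)

lemma mu_nonneg: "0 \<le> mu"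
  unfolding mu_def using r_nonneg s_nonneg by (intro suminf_nonneg summable_rs) auto

lemma mu_le_1: "mu \<le> 1"
proof -
  have "mu \<le> suminf r"
    unfolding mu_def using r_sums r_nonneg s_le_1 summable_rs
    by (intro suminf_le) (auto simp: sums_iff intro: mult_left_le)
  then show ?thesis
    using r_sums by (simp add: sums_iff)
qed

lemma expectation_s_LR: "1 \<le> n \<Longrightarrow> expectation (\<lambda>w. s (LR n w)) = mu"
  using expectation_comp_nat_valued[OF measurable_label[of "(True, n)"], of r s] LR_dist s_nonneg summable_rs
  by (simp add: mu_def mult.commute)

lemma expectation_r_LS: "1 \<le> n \<Longrightarrow> expectation (\<lambda>w. r (LS n w)) = mu"
  using expectation_comp_nat_valued[OF measurable_label[of "(False, n)"], of s r] LS_dist r_nonneg summable_rs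
  by simp (simp add: mu_def)

lemma indep_var_fun_label:
  assumes "u \<in> UNIV \<times> {1..}" and "v \<in> UNIV \<times> {1..}" and "u \<noteq> v"
  shows "indep_var borel (\<lambda>w. g1 (label u w) :: real) borel (\<lambda>w. g2 (label v w) :: real)"
proof -
  have "indep_var (\<Pi>\<^sub>M i\<in>{u}. count_space UNIV) (\<lambda>w. restrict (\<lambda>i. label i w) {u})
                  (\<Pi>\<^sub>M i\<in>{v}. count_space UNIV) (\<lambda>w. restrict (\<lambda>i. label i w) {v})"
    using assms by (intro indep_var_restrict[OF indep_vars_label]) auto
  then have "indep_var borel ((\<lambda>f. g1 (f u)) \<circ> (\<lambda>w. restrict (\<lambda>i. label i w) {u}))
                       borel ((\<lambda>f. g2 (f v)) \<circ> (\<lambda>w. restrict (\<lambda>i. label i w) {v}))"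
    by (rule indep_var_compose) (auto intro!: measurable_compose[OF measurable_component_singleton])
  then show ?thesis
    by (simp add: comp_def)
qed

lemma centred_eq_fun_label:
  "centred a = (\<lambda>w. (\<lambda>i. if fst a then s i - mu else mu - r i) (label a w))"
  by (auto simp: centred_def fun_eq_iff)

lemma abs_centred_le_1: "\<bar>centred a w\<bar> \<le> 1"
  using mu_nonneg mu_le_1 r_nonneg[of "label a w"] r_le_1[of "label a w"]
    s_nonneg[of "label a w"] s_le_1[of "label a w"]
  by (auto simp: centred_def abs_le_iff)

lemma borel_measurable_centred: "a \<in> UNIV \<times> {1..} \<Longrightarrow> centred a \<in> borel_measurable M"
  unfolding centred_eq_fun_label by (rule borel_measurable_fun_label)

lemma integrable_centred: "a \<in> UNIV \<times> {1..} \<Longrightarrow> integrable M (centred a)"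
  by (rule integrable_const_bound[where B=1]) (auto simp: abs_centred_le_1 borel_measurable_centred)

lemma expectation_centred:
  assumes "a \<in> UNIV \<times> {1..}"
  shows "expectation (centred a) = 0"
proof -
  obtain b n where a: "a = (b, n)" and n: "1 \<le> n"
    using assms by auto
  have "integrable M (\<lambda>w. s (LR n w))" "integrable M (\<lambda>w. r (LS n w))"
    using integrable_fun_label[of "(True, n)" s 1] integrable_fun_label[of "(False, n)" r 1] n
      s_nonneg s_le_1 r_nonneg r_le_1 by (auto simp: abs_le_iff)
  then show ?thesis
    using expectation_s_LR[OF n] expectation_r_LS[OF n]
    by (cases b) (simp_all add: a centred_def[abs_def] prob_space)
qed

lemma expectation_centred_mult:
  assumes "a \<in> UNIV \<times> {1..}" and "b \<in> UNIV \<times> {1..}" and "a \<noteq> b"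
  shows "expectation (\<lambda>w. centred a w * centred b w) = 0"
proof -
  have "indep_var borel (centred a) borel (centred b)"
    unfolding centred_eq_fun_label by (rule indep_var_fun_label[OF assms])
  then have "expectation (\<lambda>w. centred a w * centred b w) = expectation (centred a) * expectation (centred b)"
    using assms by (intro indep_var_lebesgue_integral integrable_centred) auto
  then show ?thesis
    using expectation_centred assms by simp
qed

lemma tendsto_prob_centred_sum:
  fixes J :: "nat \<Rightarrow> (bool \<times> nat) set" and q :: "nat \<Rightarrow> real"
  assumes J: "\<And>n. finite (J n)" "\<And>n. J n \<subseteq> UNIV \<times> {1..}"
    and q: "eventually (\<lambda>n. 0 < q n) sequentially"
    and card: "(\<lambda>n. card (J n) / (q n)\<^sup>2) \<longlonglongrightarrow> 0"
    and e: "0 < e"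
  shows "(\<lambda>n. prob {w\<in>space M. e \<le> \<bar>\<Sum>a\<in>J n. centred a w\<bar> / q n}) \<longlonglongrightarrow> 0"
proof (rule Lim_null_comparison)
  show "(\<lambda>n. card (J n) / (q n)\<^sup>2 / e\<^sup>2) \<longlonglongrightarrow> 0"
    using tendsto_divide[OF card tendsto_const[of "e\<^sup>2"]] e by simp
  show "eventually (\<lambda>n. norm (prob {w\<in>space M. e \<le> \<bar>\<Sum>a\<in>J n. centred a w\<bar> / q n})
      \<le> card (J n) / (q n)\<^sup>2 / e\<^sup>2) sequentially"
    using q
  proof eventually_elim
    case (elim n)
    have "{w\<in>space M. e \<le> \<bar>\<Sum>a\<in>J n. centred a w\<bar> / q n} = {w\<in>space M. e * q n \<le> \<bar>\<Sum>a\<in>J n. centred a w\<bar>}"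
      using elim by (simp add: pos_le_divide_eq)
    also have "prob \<dots> \<le> card (J n) / (e * q n)\<^sup>2"
      using J e elim
      by (intro prob_abs_sum_ge_le_card expectation_centred_mult borel_measurable_centred
          abs_centred_le_1) auto
    finally show ?case
      by (simp add: power_mult_distrib field_simps)
  qed
qed

lemma indep_vars_pair_diff: "indep_vars (\<lambda>_. borel) pair_diff UNIV"
proof -
  let ?K = "\<lambda>j::nat. {(True, Suc j), (False, Suc j)}"
  have "indep_vars (\<lambda>j. \<Pi>\<^sub>M i\<in>?K j. count_space UNIV) (\<lambda>j w. restrict (\<lambda>i. label i w) (?K j)) UNIV"
    by (intro indep_vars_restrict[OF indep_vars_label]) (auto simp: disjoint_family_on_def)
  then have "indep_vars (\<lambda>_. borel)
      (\<lambda>j w. (\<lambda>f. r (f (False, Suc j)) - s (f (True, Suc j))) (restrict (\<lambda>i. label i w) (?K j))) UNIV"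
    by (rule indep_vars_compose2) measurable
  then show ?thesis
    by (simp add: pair_diff_def[abs_def])
qed

lemma borel_measurable_pair_diff: "pair_diff j \<in> borel_measurable M"
  using indep_vars_pair_diff unfolding indep_vars_def by auto

lemma abs_pair_diff_le_1: "\<bar>pair_diff j w\<bar> \<le> 1"
  using r_nonneg[of "LS (Suc j) w"] s_nonneg[of "LR (Suc j) w"] r_le_1[of "LS (Suc j) w"] s_le_1[of "LR (Suc j) w"]
  by (auto simp: pair_diff_def abs_le_iff)

lemma prob_LR_LS:
  assumes n: "1 \<le> n"
  shows "prob {w\<in>space M. LR n w = a \<and> LS n w = b} = r a * s b"
proof -
  let ?J = "{(True, n), (False, n)}"
  let ?A = "\<lambda>(c::bool, _::nat). if c then {a} else {b}"
  have "prob (\<Inter>i\<in>?J. label i -` ?A i \<inter> space M) = (\<Prod>i\<in>?J. prob (label i -` ?A i \<inter> space M))"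
    using n by (intro indep_varsD[OF indep_vars_label]) auto
  moreover have "(\<Inter>i\<in>?J. label i -` ?A i \<inter> space M) = {w\<in>space M. LR n w = a \<and> LS n w = b}"
    by auto
  moreover have "(\<Prod>i\<in>?J. prob (label i -` ?A i \<inter> space M))
      = prob {w\<in>space M. LR n w = a} * prob {w\<in>space M. LS n w = b}"
    by (simp add: vimage_def Int_def conj_commute)
  ultimately show ?thesis
    using LR_dist[OF n] LS_dist[OF n] by simp
qed

lemma distr_LR_LS:
  assumes n: "1 \<le> n"
  shows "distr M (count_space UNIV) (\<lambda>w. (LR n w, LS n w)) = distr M (count_space UNIV) (\<lambda>w. (LR 1 w, LS 1 w))"
proof -
  have meas: "(\<lambda>w. (LR k w, LS k w)) \<in> measurable M (count_space UNIV)" if "1 \<le> k" for k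
    using measurable_Pair[OF measurable_label[of "(True, k)"] measurable_label[of "(False, k)"]] that
    by (simp add: pair_measure_countable)
  have point: "emeasure (distr M (count_space UNIV) (\<lambda>w. (LR k w, LS k w))) {(a, b)} = ennreal (r a * s b)"
    if "1 \<le> k" for k a b
  proof -
    have "(\<lambda>w. (LR k w, LS k w)) -` {(a, b)} \<inter> space M = {w\<in>space M. LR k w = a \<and> LS k w = b}"
      by auto
    then show ?thesis
      using meas[OF that] prob_LR_LS[OF that, of a b] by (simp add: emeasure_distr emeasure_eq_measure)
  qed
  show ?thesis
    using point[OF n] point[of 1] by (intro measure_eqI_countable[where A=UNIV]) auto
qed

lemma distr_pair_diff: "distr M borel (pair_diff j) = distr M borel (pair_diff 0)"
proof -
  have "distr M borel (pair_diff j)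
      = distr (distr M (count_space UNIV) (\<lambda>w. (LR (Suc j) w, LS (Suc j) w))) borel (\<lambda>(a, b). r b - s a)" for j
    using measurable_Pair[OF measurable_label[of "(True, Suc j)"] measurable_label[of "(False, Suc j)"]]
    by (subst distr_distr) (auto simp: pair_measure_countable comp_def pair_diff_def[abs_def])
  then show ?thesis
    using distr_LR_LS[of "Suc j"] distr_LR_LS[of 1] by simp
qed

lemma expectation_pair_diff: "expectation (pair_diff j) = 0"
proof -
  have "integrable M (\<lambda>w. r (LS (Suc j) w))" "integrable M (\<lambda>w. s (LR (Suc j) w))"
    using integrable_fun_label[of "(False, Suc j)" r 1] integrable_fun_label[of "(True, Suc j)" s 1]
      r_nonneg r_le_1 s_nonneg s_le_1 by (auto simp: abs_le_iff)
  then show ?thesis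
    using expectation_r_LS[of "Suc j"] expectation_s_LR[of "Suc j"] by (simp add: pair_diff_def[abs_def])
qed

lemma variance_pair_diff: "variance (pair_diff j) = variance (pair_diff 0)"
proof -
  have "variance (pair_diff j) = integral\<^sup>L (distr M borel (pair_diff j)) (\<lambda>x. x\<^sup>2)" for j
    by (simp add: integral_distr expectation_pair_diff borel_measurable_pair_diff)
  then show ?thesis
    by (simp only: distr_pair_diff[of j])
qed

lemma variance_pair_diff_0:
  "variance (pair_diff 0) = variance (\<lambda>w. s (LR 1 w)) + variance (\<lambda>w. r (LS 1 w))"
proof -
  define A where "A w = r (LS 1 w) - mu" for w
  define B where "B w = s (LR 1 w) - mu" for w
  have bounded: "\<bar>r i - mu\<bar> \<le> 1" "\<bar>s i - mu\<bar> \<le> 1" for i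
    using mu_nonneg mu_le_1 r_nonneg[of i] r_le_1[of i] s_nonneg[of i] s_le_1[of i] by (auto simp: abs_le_iff)
  have int_LS: "integrable M (\<lambda>w. g (LS 1 w))" and int_LR: "integrable M (\<lambda>w. g (LR 1 w))"
    if "\<And>i. \<bar>g i\<bar> \<le> 1" for g :: "nat \<Rightarrow> real"
    using integrable_fun_label[of "(False, 1)" g 1] integrable_fun_label[of "(True, 1)" g 1] that by simp_all
  have int: "integrable M A" "integrable M B" "integrable M (\<lambda>w. (A w)\<^sup>2)" "integrable M (\<lambda>w. (B w)\<^sup>2)"
    unfolding A_def B_def
    using int_LS[of "\<lambda>i. r i - mu"] int_LR[of "\<lambda>i. s i - mu"] int_LS[of "\<lambda>i. (r i - mu)\<^sup>2"]
      int_LR[of "\<lambda>i. (s i - mu)\<^sup>2"] bounded by (simp_all add: abs_square_le_1)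
  have indep: "indep_var borel A borel B"
    unfolding A_def B_def using indep_var_fun_label[of "(False, 1)" "(True, 1)" "\<lambda>i. r i - mu" "\<lambda>i. s i - mu"]
    by simp
  have "integrable M (\<lambda>w. r (LS 1 w))"
    using r_nonneg r_le_1 by (intro int_LS) (simp add: abs_le_iff)
  then have "expectation A = 0"
    using expectation_r_LS[of 1] by (simp add: A_def[abs_def] prob_space)
  then have EAB: "expectation (\<lambda>w. A w * B w) = 0"
    using indep_var_lebesgue_integral[OF indep int(1,2)] by simp
  have "pair_diff 0 = (\<lambda>w. A w - B w)"
    by (simp add: pair_diff_def A_def B_def fun_eq_iff)
  then have "variance (pair_diff 0) = expectation (\<lambda>w. (A w)\<^sup>2 + (B w)\<^sup>2 - 2 * (A w * B w))"
    using expectation_pair_diff[of 0] by (simp add: power2_diff mult.assoc)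
  also have "\<dots> = expectation (\<lambda>w. (A w)\<^sup>2) + expectation (\<lambda>w. (B w)\<^sup>2) - 2 * expectation (\<lambda>w. A w * B w)"
    using int indep_var_integrable[OF indep int(1,2)] by simp
  finally show ?thesis
    using EAB expectation_r_LS[of 1] expectation_s_LR[of 1] by (simp add: A_def B_def)
qed

lemma variance_pair_diff_pos:
  assumes "0 < sqrt (variance (\<lambda>w. s (LR 1 w))) + sqrt (variance (\<lambda>w. r (LS 1 w)))"
  shows "0 < variance (pair_diff 0)"
proof -
  have sum_pos: "0 < a + b" if "0 < sqrt a + sqrt b" "0 \<le> a" "0 \<le> b" for a b :: real
    using that by (smt (verit) real_sqrt_zero)
  show ?thesis
    unfolding variance_pair_diff_0 by (rule sum_pos[OF assms variance_positive variance_positive])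
qed

lemma tendsto_prob_sum_pair_diff_le:
  assumes v: "0 < variance (pair_diff 0)"
  shows "(\<lambda>q. prob {w\<in>space M. (\<Sum>i<q. pair_diff i w) / sqrt (real q * variance (pair_diff 0)) \<le> t})
           \<longlonglongrightarrow> cdf std_normal_distribution t"
proof -
  have "weak_conv_m (\<lambda>q. distr M borel (\<lambda>w. (\<Sum>i<q. pair_diff i w) / sqrt (real q * (sqrt (variance (pair_diff 0)))\<^sup>2)))
      std_normal_distribution"
  proof (rule central_limit_theorem_zero_mean[OF indep_vars_pair_diff expectation_pair_diff])
    show "integrable M (\<lambda>w. (pair_diff j w)\<^sup>2)" for j
      using abs_pair_diff_le_1[of j] borel_measurable_pair_diff[of j]
      by (intro integrable_const_bound[where B=1]) (auto simp: abs_square_le_1)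
  qed (use v variance_pair_diff distr_pair_diff in auto)
  then show ?thesis
    using v std_normal_isCont_cdf borel_measurable_pair_diff
    by (simp add: weak_conv_m_def weak_conv_def cdf_distr)
qed

lemma borel_measurable_GammaR: "GammaR s LR k \<in> borel_measurable M"
  unfolding GammaR_def[abs_def] by (intro borel_measurable_sum borel_measurable_fun_LR) auto

lemma borel_measurable_GammaS: "GammaS r LS m \<in> borel_measurable M"
  unfolding GammaS_def[abs_def] by (intro borel_measurable_sum borel_measurable_fun_LS) auto

lemma sum_read_labels:
  "(\<Sum>a\<in>read_labels k m. f a) = (\<Sum>j=1..k. f (True, j)) + (\<Sum>j=1..m. f (False, j))"
  unfolding read_labels_def
  using sum.reindex[of "Pair True" "{1..k}" f] sum.reindex[of "Pair False" "{1..m}" f]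
  by (subst sum.union_disjoint) (auto simp: inj_on_def)

lemma GammaR_minus_GammaS:
  "GammaR s LR k w - GammaS r LS m w = mu * (real k - real m) + (\<Sum>a\<in>read_labels k m. centred a w)"
  by (simp add: sum_read_labels centred_def GammaR_def GammaS_def sum_subtractf algebra_simps)

lemma sum_pair_diff: "(\<Sum>i<p. pair_diff i w) = GammaS r LS p w - GammaR s LR p w"
  by (simp add: pair_diff_def GammaR_def GammaS_def sum_subtractf sum.atLeast1_atMost_eq)

lemma GammaR_minus_GammaS_split:
  assumes "p \<le> k" and "p \<le> m"
  shows "GammaR s LR k w - GammaS r LS m w
    = mu * (real k - real m) - (\<Sum>i<p. pair_diff i w)
      + (\<Sum>a\<in>read_labels k m - read_labels p p. centred a w)"
proof -
  have "read_labels p p \<subseteq> read_labels k m"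
    using assms by (auto simp: read_labels_def)
  then have "(\<Sum>a\<in>read_labels k m - read_labels p p. centred a w)
      = (\<Sum>a\<in>read_labels k m. centred a w) - (\<Sum>a\<in>read_labels p p. centred a w)"
    by (simp add: sum_diff read_labels_def)
  then show ?thesis
    using GammaR_minus_GammaS[where k=k and m=m and w=w] GammaR_minus_GammaS[where k=p and m=p and w=w]
      sum_pair_diff[where p=p and w=w]
    by simp
qed

lemma card_read_labels_diff:
  assumes "p \<le> k" and "p \<le> m"
  shows "card (read_labels k m - read_labels p p) = (k - p) + (m - p)"
proof -
  have "read_labels k m - read_labels p p = Pair True ` {p + 1..k} \<union> Pair False ` {p + 1..m}"
    by (auto simp: read_labels_def image_iff)
  moreover have "card (Pair True ` {p + 1..k} \<union> Pair False ` {p + 1..m})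
      = card (Pair True ` {p + 1..k}) + card (Pair False ` {p + 1..m})"
    by (rule card_Un_disjoint) auto
  moreover have "card (Pair b ` {p + 1..j}) = j - p" for b :: bool and j
    by (simp add: card_image inj_on_def)
  ultimately show ?thesis
    by simp
qed

lemma tendsto_prob_unpaired_sum:
  fixes k m :: "nat \<Rightarrow> nat" and e :: real
  defines "p \<equiv> \<lambda>n. min (k n) (m n)" and "v \<equiv> variance (pair_diff 0)"
  assumes p: "filterlim p at_top sequentially"
    and gap: "(\<lambda>n. (real (k n) - real (m n)) / sqrt (real (p n))) \<longlonglongrightarrow> c"
    and v: "0 < v" and e: "0 < e"
  shows "(\<lambda>n. prob {w\<in>space M. e \<le> \<bar>\<Sum>a\<in>read_labels (k n) (m n) - read_labels (p n) (p n). centred a w\<bar>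
            / sqrt (real (p n) * v)}) \<longlonglongrightarrow> 0"
proof (rule tendsto_prob_centred_sum)
  note p_pos = eventually_pos_of_filterlim_at_top[OF p]
  show "eventually (\<lambda>n. 0 < sqrt (real (p n) * v)) sequentially"
    using p_pos by eventually_elim (simp add: v)
  have "(\<lambda>n. \<bar>real (k n) - real (m n)\<bar> / real (p n) / v) \<longlonglongrightarrow> 0"
    using tendsto_divide[OF tendsto_abs_gap_div_min[OF p[unfolded p_def] gap[unfolded p_def]] tendsto_const[of v]] v
    by (simp add: p_def)
  moreover have "eventually (\<lambda>n. \<bar>real (k n) - real (m n)\<bar> / real (p n) / v
      = card (read_labels (k n) (m n) - read_labels (p n) (p n)) / (sqrt (real (p n) * v))\<^sup>2) sequentially"
    using p_pos
  proof eventually_elim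
    case (elim n)
    have "real (card (read_labels (k n) (m n) - read_labels (p n) (p n))) = \<bar>real (k n) - real (m n)\<bar>"
      using card_read_labels_diff[of "p n" "k n" "m n"] by (simp add: p_def of_nat_diff min_def abs_if)
    then show ?case
      using elim v by simp
  qed
  ultimately show "(\<lambda>n. card (read_labels (k n) (m n) - read_labels (p n) (p n)) / (sqrt (real (p n) * v))\<^sup>2)
      \<longlonglongrightarrow> 0"
    by (simp add: Lim_transform_eventually)
qed (use e in \<open>auto simp: read_labels_def\<close>)

lemma tendsto_prob_far_from_drift:
  fixes k m :: "nat \<Rightarrow> nat" and c e :: real
  defines "p \<equiv> \<lambda>n. min (k n) (m n)" and "v \<equiv> variance (pair_diff 0)"
  assumes p: "filterlim p at_top sequentially"
    and gap: "(\<lambda>n. (real (k n) - real (m n)) / sqrt (real (p n))) \<longlonglongrightarrow> c"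
    and v: "0 < v" and e: "0 < e"
  shows "(\<lambda>n. prob {w\<in>space M. e \<le> \<bar>(mu * (real (k n) - real (m n))
            + (\<Sum>a\<in>read_labels (k n) (m n) - read_labels (p n) (p n). centred a w))
              / sqrt (real (p n) * v) - mu * c / sqrt v\<bar>}) \<longlonglongrightarrow> 0"
proof -
  define q where "q n = sqrt (real (p n) * v)" for n
  define T where "T n w = (\<Sum>a\<in>read_labels (k n) (m n) - read_labels (p n) (p n). centred a w)" for n w
  have noise: "(\<lambda>n. prob {w\<in>space M. e / 2 \<le> \<bar>T n w\<bar> / q n}) \<longlonglongrightarrow> 0"
    using tendsto_prob_unpaired_sum[OF p[unfolded p_def] gap[unfolded p_def] v[unfolded v_def], of "e / 2"] e
    by (simp add: T_def q_def p_def v_def)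
  have "(\<lambda>n. mu * ((real (k n) - real (m n)) / sqrt (real (p n))) / sqrt v) \<longlonglongrightarrow> mu * c / sqrt v"
    using v by (intro tendsto_intros gap) simp
  then have "eventually (\<lambda>n. \<bar>mu * (real (k n) - real (m n)) / q n - mu * c / sqrt v\<bar> < e / 2) sequentially"
    using tendstoD[of _ "mu * c / sqrt v" sequentially "e / 2"] e by (simp add: q_def real_sqrt_mult dist_real_def)
  then have "eventually (\<lambda>n. prob {w\<in>space M. e \<le> \<bar>(mu * (real (k n) - real (m n)) + T n w) / q n - mu * c / sqrt v\<bar>}
      \<le> prob {w\<in>space M. e / 2 \<le> \<bar>T n w\<bar> / q n}) sequentially"
    using eventually_pos_of_filterlim_at_top[OF p]
  proof eventually_elim
    case (elim n)
    have q: "0 < q n"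
      using elim v by (simp add: q_def)
    have "e / 2 \<le> \<bar>T n w\<bar> / q n" if "e \<le> \<bar>(mu * (real (k n) - real (m n)) + T n w) / q n - mu * c / sqrt v\<bar>" for w
    proof -
      let ?d = "mu * (real (k n) - real (m n)) / q n - mu * c / sqrt v"
      have "e \<le> \<bar>T n w / q n + ?d\<bar>"
        using that by (simp add: add_divide_distrib)
      also have "\<dots> \<le> \<bar>T n w\<bar> / q n + \<bar>?d\<bar>"
        using q abs_triangle_ineq[of "T n w / q n" ?d] by (simp add: abs_divide)
      finally show ?thesis
        using elim by linarith
    qed
    moreover have "(\<lambda>w. T n w) \<in> borel_measurable M"
      unfolding T_def by (intro borel_measurable_sum borel_measurable_centred) (auto simp: read_labels_def)
    ultimately show ?case
      using q by (intro finite_measure_mono) auto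
  qed
  then show ?thesis
    by (intro Lim_null_comparison[OF _ noise]) (simp add: T_def q_def)
qed

lemma GammaS_GammaR_compare:
  assumes "p \<le> k" and "p \<le> m" and "0 < q"
  shows "GammaS r LS m w < GammaR s LR k w \<longleftrightarrow>
      (\<Sum>i<p. pair_diff i w) / q < (mu * (real k - real m) + (\<Sum>a\<in>read_labels k m - read_labels p p. centred a w)) / q"
    and "GammaS r LS m w \<le> GammaR s LR k w \<longleftrightarrow>
      (\<Sum>i<p. pair_diff i w) / q \<le> (mu * (real k - real m) + (\<Sum>a\<in>read_labels k m - read_labels p p. centred a w)) / q"
  using GammaR_minus_GammaS_split[OF assms(1,2), where w=w] assms(3)
  by (auto simp: divide_less_cancel divide_le_cancel)

lemma tendsto_prob_GammaS_GammaR: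
  fixes k m :: "nat \<Rightarrow> nat" and c :: real
  defines "p \<equiv> \<lambda>n. min (k n) (m n)" and "v \<equiv> variance (pair_diff 0)"
  assumes p: "filterlim p at_top sequentially"
    and gap: "(\<lambda>n. (real (k n) - real (m n)) / sqrt (real (p n))) \<longlonglongrightarrow> c"
    and v: "0 < v"
  shows "(\<lambda>n. prob {w\<in>space M. GammaS r LS (m n) w < GammaR s LR (k n) w})
           \<longlonglongrightarrow> cdf std_normal_distribution (mu * c / sqrt v)"
    and "(\<lambda>n. prob {w\<in>space M. GammaS r LS (m n) w \<le> GammaR s LR (k n) w})
           \<longlonglongrightarrow> cdf std_normal_distribution (mu * c / sqrt v)"
proof -
  define q where "q n = sqrt (real (p n) * v)" for n
  define Z where "Z n w = (\<Sum>i<p n. pair_diff i w) / q n" for n w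
  define W where "W n w = (mu * (real (k n) - real (m n))
    + (\<Sum>a\<in>read_labels (k n) (m n) - read_labels (p n) (p n). centred a w)) / q n" for n w
  have [measurable]: "Z n \<in> borel_measurable M" "W n \<in> borel_measurable M" for n
    unfolding Z_def W_def using borel_measurable_pair_diff
    by (auto intro!: borel_measurable_divide borel_measurable_add borel_measurable_sum borel_measurable_centred
        simp: read_labels_def)
  have Z_conv: "(\<lambda>n. prob {w\<in>space M. Z n w \<le> t}) \<longlonglongrightarrow> cdf std_normal_distribution t" for t
    using filterlim_compose[OF tendsto_prob_sum_pair_diff_le[OF v[unfolded v_def]] p]
    by (simp add: Z_def q_def v_def)
  have W_conv: "(\<lambda>n. prob {w\<in>space M. e \<le> \<bar>W n w - mu * c / sqrt v\<bar>}) \<longlonglongrightarrow> 0" if "0 < e" for e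
    using tendsto_prob_far_from_drift[OF p[unfolded p_def] gap[unfolded p_def] v[unfolded v_def] that]
    by (simp add: W_def q_def p_def v_def)
  have events: "eventually (\<lambda>n.
      {w\<in>space M. GammaS r LS (m n) w < GammaR s LR (k n) w} = {w\<in>space M. Z n w < W n w} \<and>
      {w\<in>space M. GammaS r LS (m n) w \<le> GammaR s LR (k n) w} = {w\<in>space M. Z n w \<le> W n w}) sequentially"
    using eventually_pos_of_filterlim_at_top[OF p]
  proof eventually_elim
    case (elim n)
    have "p n \<le> k n" "p n \<le> m n" "0 < q n"
      using elim v by (simp_all add: p_def q_def)
    then show ?case
      by (simp add: GammaS_GammaR_compare Z_def W_def)
  qed
  have mono: "prob {w\<in>space M. Z n w < W n w} \<le> prob {w\<in>space M. Z n w \<le> W n w}" for n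
    by (intro finite_measure_mono) auto
  note limit = slutsky_sandwich[of Z W, OF _ _ Z_conv std_normal_isCont_cdf W_conv]
  show "(\<lambda>n. prob {w\<in>space M. GammaS r LS (m n) w < GammaR s LR (k n) w})
           \<longlonglongrightarrow> cdf std_normal_distribution (mu * c / sqrt v)"
    using events by (intro limit) (auto elim!: eventually_mono simp: mono)
  show "(\<lambda>n. prob {w\<in>space M. GammaS r LS (m n) w \<le> GammaR s LR (k n) w})
           \<longlonglongrightarrow> cdf std_normal_distribution (mu * c / sqrt v)"
    using events by (intro limit) (auto elim!: eventually_mono simp: mono)
qed

lemma tendsto_prob_greedy_Rcount_le:
  fixes C :: "nat \<Rightarrow> 'a \<Rightarrow> bool" and x :: real
  assumes Rcount: "\<And>n. Rcount C n \<in> measurable M (count_space UNIV)"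
    and greedy_R: "\<And>n w. n \<ge> 1 \<Longrightarrow> w \<in> space M \<Longrightarrow>
      GammaS r LS (Scount C n w) w > GammaR s LR (Rcount C n w) w \<Longrightarrow> C (Suc n) w"
    and greedy_S: "\<And>n w. n \<ge> 1 \<Longrightarrow> w \<in> space M \<Longrightarrow>
      GammaS r LS (Scount C n w) w < GammaR s LR (Rcount C n w) w \<Longrightarrow> \<not> C (Suc n) w"
    and v: "0 < variance (pair_diff 0)"
  shows "(\<lambda>n. prob {w\<in>space M. (real (Rcount C n w) - real n / 2) / sqrt (real n) \<le> x})
           \<longlonglongrightarrow> cdf std_normal_distribution (mu * (2 * sqrt 2 * x) / sqrt (variance (pair_diff 0)))"
proof -
  define k where "k = threshold x"
  have between: "eventually (\<lambda>n.
      prob {w\<in>space M. GammaS r LS (n - 1 - k n) w < GammaR s LR (k n) w}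
        \<le> prob {w\<in>space M. (real (Rcount C n w) - real n / 2) / sqrt (real n) \<le> x} \<and>
      prob {w\<in>space M. (real (Rcount C n w) - real n / 2) / sqrt (real n) \<le> x}
        \<le> prob {w\<in>space M. GammaS r LS (n - 1 - k n) w \<le> GammaR s LR (k n) w}) sequentially"
    using eventually_threshold_range[of x] eventually_gt_at_top[of 0]
  proof eventually_elim
    case (elim n)
    have "k n < n"
      using threshold_bounds(1) elim by (simp add: k_def)
    have "{w\<in>space M. (real (Rcount C n w) - real n / 2) / sqrt (real n) \<le> x}
        = {w\<in>space M. Rcount C n w \<le> k n}"
      using le_threshold_iff elim by (simp add: k_def)
    moreover have "{w\<in>space M. GammaS r LS (n - 1 - k n) w < GammaR s LR (k n) w}
        \<subseteq> {w\<in>space M. Rcount C n w \<le> k n}"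
      and "{w\<in>space M. Rcount C n w \<le> k n}
        \<subseteq> {w\<in>space M. GammaS r LS (n - 1 - k n) w \<le> GammaR s LR (k n) w}"
      using greedy_Rcount_le[where r=r and s=s and LR=LR and LS=LS and C=C,
          OF r_nonneg s_nonneg greedy_R greedy_S \<open>k n < n\<close>] by auto
    moreover have "{w\<in>space M. Rcount C n w \<le> k n} \<in> sets M"
      using measurable_sets[OF Rcount, of "{..k n}"] by (simp add: vimage_def Int_def conj_commute)
    moreover have "{w\<in>space M. GammaS r LS (n - 1 - k n) w \<le> GammaR s LR (k n) w} \<in> sets M"
      using borel_measurable_GammaR borel_measurable_GammaS by measurable
    ultimately show ?case
      by (simp add: finite_measure_mono)
  qed
  note limits = tendsto_prob_GammaS_GammaR[OF threshold_asymptotics[of x] v, folded k_def]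
  show ?thesis
    by (rule tendsto_sandwich[OF _ _ limits]) (use between in \<open>auto elim: eventually_mono\<close>)
qed

end

theorem theorem3p2:
  fixes M :: "'a measure" and N :: "'b measure" and U :: "'a \<Rightarrow> 'b"
    and r s :: "nat \<Rightarrow> real"
    and LR LS :: "nat \<Rightarrow> 'a \<Rightarrow> nat"
    and C :: "nat \<Rightarrow> 'a \<Rightarrow> bool"
  assumes M: "prob_space M"
    and r_nonneg: "\<And>i. r i \<ge> 0" and r0: "r 0 = 0" and r_sum: "r sums 1"
    and s_nonneg: "\<And>i. s i \<ge> 0" and s0: "s 0 = 0" and s_sum: "s sums 1"
    and mu_pos: "(\<Sum>i. r i * s i) > 0"
    and LR_rv: "\<And>n. n \<ge> 1 \<Longrightarrow> LR n \<in> measurable M (count_space UNIV)"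
    and LS_rv: "\<And>n. n \<ge> 1 \<Longrightarrow> LS n \<in> measurable M (count_space UNIV)"
    and LR_dist: "\<And>n i. n \<ge> 1 \<Longrightarrow> measure M {w \<in> space M. LR n w = i} = r i"
    and LS_dist: "\<And>n i. n \<ge> 1 \<Longrightarrow> measure M {w \<in> space M. LS n w = i} = s i"
    and labels_indep: "prob_space.indep_vars M (\<lambda>_. count_space UNIV)
                         (\<lambda>(b, n). if b then LR n else LS n) (UNIV \<times> {1..})"
    and U_rv: "U \<in> measurable M N"
    and U_indep: "prob_space.indep_set M (sets (vimage_algebra (space M) U N))
                    (sets (vimage_algebra (space M)
                       (\<lambda>w. restrict (\<lambda>(b, n). if b then LR n w else LS n w) (UNIV \<times> {1..}))
                       (\<Pi>\<^sub>M i\<in>(UNIV \<times> {1..}). count_space UNIV)))"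
    and sigma_pos: "sqrt (prob_space.variance M (\<lambda>w. s (LR 1 w)))
                    + sqrt (prob_space.variance M (\<lambda>w. r (LS 1 w))) > 0"
    and policy: "\<And>n. C (Suc n) \<in> measurable (filt M N U LR LS C n) (count_space UNIV)"
    and greedy_R: "\<And>n w. n \<ge> 1 \<Longrightarrow> w \<in> space M \<Longrightarrow>
                    GammaS r LS (Scount C n w) w > GammaR s LR (Rcount C n w) w \<Longrightarrow> C (Suc n) w"
    and greedy_S: "\<And>n w. n \<ge> 1 \<Longrightarrow> w \<in> space M \<Longrightarrow>
                    GammaS r LS (Scount C n w) w < GammaR s LR (Rcount C n w) w \<Longrightarrow> \<not> C (Suc n) w"
  shows "weak_conv_m
           (\<lambda>n. distr M borel (\<lambda>w. (real (Rcount C n w) - real n / 2) / sqrt (real n)))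
           (density lborel (normal_density 0
              (sqrt ((prob_space.variance M (\<lambda>w. s (LR 1 w))
                      + prob_space.variance M (\<lambda>w. r (LS 1 w)))
                     / (8 * (\<Sum>i. r i * s i)\<^sup>2)))))"
proof -
  interpret label_sequences M r s LR LS
    using M r_nonneg r_sum s_nonneg s_sum LR_dist LS_dist labels_indep
    by (simp add: label_sequences_def label_sequences_axioms_def)
  have Rcount: "Rcount C n \<in> measurable M (count_space UNIV)" for n
    by (rule measurable_Rcount_policy[OF U_rv LR_rv LS_rv policy])
  have v: "0 < variance (pair_diff 0)"
    by (rule variance_pair_diff_pos[OF sigma_pos])
  have mu: "0 < mu"
    using mu_pos by (simp add: mu_def)
  have \<sigma>: "0 < sqrt (variance (pair_diff 0) / (8 * mu\<^sup>2))"
    using v mu by simp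
  have "(\<lambda>n. prob {w\<in>space M. (real (Rcount C n w) - real n / 2) / sqrt (real n) \<le> x})
      \<longlonglongrightarrow> cdf (density lborel (normal_density 0 (sqrt (variance (pair_diff 0) / (8 * mu\<^sup>2))))) x" for x
    using tendsto_prob_greedy_Rcount_le[OF Rcount greedy_R greedy_S v, of x]
    by (simp only: normal_cdf_scale[OF \<sigma>] sqrt_eight_scaling[OF mu v])
  moreover have "(\<lambda>w. (real (Rcount C n w) - real n / 2) / sqrt (real n)) \<in> borel_measurable M" for n
    using measurable_compose[OF Rcount, of real] by measurable
  ultimately show ?thesis
    unfolding weak_conv_m_def weak_conv_def by (simp add: cdf_distr variance_pair_diff_0 mu_def)
qed

end
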